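(* Let $b_1,\dots,b_n$ be positive integers and $N=b_1+\dots+b_n$. Then the initial complex is the disjoint union of intervals $$\Delta_\prec=\bigsqcup_{u\in\mathcal S}[\mathcal G_u,\mathcal F_u],$$ where $[\mathcal G,\mathcal F]=\{H\in\Delta_\prec\mid \mathcal G\subseteq H\subseteq\mathcal F\}$. Consequently the Hilbert–Poincaré series of $R_{[\mathbf b]}$ is $$P_{R_{[\mathbf b]}}(t)=\frac{A_{[\mathbf b]}(t)}{(1-t)^{N+1}},\qquad A_{[\mathbf b]}(t)=\sum_{u\in\mathcal S}t^{\mathrm{desc}(u)}=\sum_kA([\mathbf b],k)t^k,$$ i.e. the $k$-th entry of the $h$-vector of $R_{[\mathbf b]}$ equals the Simon Newcomb number $A([\mathbf b],k)$.
   Context: Let $K$ be a field, $\mathcal M=\{0,\dots,b_1\}\times\dots\times\{0,\dots,b_n\}\subset\mathbb N^n$ with the componentwise partial order, $S=K[T_v\mid v\in\mathcal M]$ standard graded, $\mathcal J_{[\mathbf b]}=\ker(T_v\mapsto x_{1,v_1}\cdots x_{n,v_n})$, $R_{[\mathbf b]}=S/\mathcal J_{[\mathbf b]}$. $\prec$ is the reverse lexicographic order with respect to a linear extension of the componentwise order on the variables, and $\Delta_\prec$ is the simplicial complex on $\mathcal M$ whose Stanley–Reisner ideal is $\mathrm{in}_\prec(\mathcal J_{[\mathbf b]})$; its faces are the chains of $\mathcal M$. Let $\mathcal S$ be the set of words $u=u_1u_2\cdots u_N$ over $\{1,\dots,n\}$ containing the letter $i$ exactly $b_i$ times. A descent of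 $u$ is an index $1\le m\le N-1$ with $u_m>u_{m+1}$; $\mathrm{desc}(u)$ is the number of descents, and the Simon Newcomb number $A([\mathbf b],k)$ is the number of $u\in\mathcal S$ with exactly $k$ descents. With $\varepsilon_1,\dots,\varepsilon_n$ the standard basis of $\mathbb Z^n$, put $p_m(u)=\sum_{i=1}^m\varepsilon_{u_i}$ for $0\le m\le N$, $\mathcal F_u=\{p_0(u),\dots,p_N(u)\}$ (a maximal chain of $\mathcal M$; $u\mapsto\mathcal F_u$ is a bijection from $\mathcal S$ to the facets of $\Delta_\prec$) and $\mathcal G_u=\{p_m(u)\mid 1\le m\le N-1,\ u_m>u_{m+1}\}$ (the descent set). *)

theory Defs
  imports "HOL-Library.Poly_Mapping" "HOL-Computational_Algebra.Computational_Algebra"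
begin

(* Indexing convention: the letters / coordinates 1..n of the paper are 0..n-1 here;
   b = [b_1,...,b_n] is a list, n = length b. *)

definition box :: "nat list \<Rightarrow> nat list set" where
  "box b = {v. length v = length b \<and> (\<forall>i<length b. v ! i \<le> b ! i)}"

definition cle :: "nat list \<Rightarrow> nat list \<Rightarrow> nat list \<Rightarrow> bool" where
  "cle b v w \<longleftrightarrow> (\<forall>i<length b. v ! i \<le> w ! i)"

(* the faces of the initial complex Delta_prec: the chains of M (incl. the empty face) *)
definition init_complex :: "nat list \<Rightarrow> nat list set set" where
  "init_complex b = {H. H \<subseteq> box b \<and> (\<forall>v\<in>H. \<forall>w\<in>H. cle b v w \<or> cle b w v)}"

definition words :: "nat list \<Rightarrow> nat list set" where
  "words b = {u. length u = sum_list b \<and> set u \<subseteq> {..<length b}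
                 \<and> (\<forall>i<length b. count_list u i = b ! i)}"

definition pt :: "nat list \<Rightarrow> nat list \<Rightarrow> nat \<Rightarrow> nat list" where
  "pt b u m = map (\<lambda>i. count_list (take m u) i) [0..<length b]"

definition Fu :: "nat list \<Rightarrow> nat list \<Rightarrow> nat list set" where
  "Fu b u = pt b u ` {0..length u}"

(* descent at paper-position m (1-based) = 0-based index j = m-1 *)
definition Gu :: "nat list \<Rightarrow> nat list \<Rightarrow> nat list set" where
  "Gu b u = {pt b u (Suc j) | j. Suc j < length u \<and> u ! (Suc j) < u ! j}"

definition desc :: "nat list \<Rightarrow> nat" where
  "desc u = card {j. Suc j < length u \<and> u ! (Suc j) < u ! j}"

definition face_interval :: "nat list \<Rightarrow> nat list set \<Rightarrow> nat list set \<Rightarrow> nat list set set" where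
  "face_interval b G F = {H \<in> init_complex b. G \<subseteq> H \<and> H \<subseteq> F}"

definition newcomb :: "nat list \<Rightarrow> nat \<Rightarrow> nat" where
  "newcomb b k = card {u \<in> words b. desc u = k}"

definition A_poly :: "nat list \<Rightarrow> rat poly" where
  "A_poly b = (\<Sum>u\<in>words b. monom 1 (desc u))"

(* Polynomials: S = K[T_v | v in M] as finitely supported maps from monomials
   (nat list \<Rightarrow>\<^sub>0 nat, exponent vectors on the variables T_v) to K;
   target ring K[x_{i,j}] with variables indexed by nat \<times> nat. *)

definition pm_scale :: "'k::field \<Rightarrow> ('m \<Rightarrow>\<^sub>0 'k) \<Rightarrow> ('m \<Rightarrow>\<^sub>0 'k)" where
  "pm_scale c p = Poly_Mapping.map (\<lambda>x. c * x) p"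

(* image of the monomial T^alpha under T_v \<mapsto> x_{1,v_1} ... x_{n,v_n} *)
definition xmonom :: "(nat list \<Rightarrow>\<^sub>0 nat) \<Rightarrow> ((nat \<times> nat) \<Rightarrow>\<^sub>0 nat)" where
  "xmonom \<alpha> = (\<Sum>v\<in>Poly_Mapping.keys \<alpha>. \<Sum>i<length v. Poly_Mapping.single (i, v ! i) (Poly_Mapping.lookup \<alpha> v))"

definition phi :: "((nat list \<Rightarrow>\<^sub>0 nat) \<Rightarrow>\<^sub>0 'k::field) \<Rightarrow> (((nat \<times> nat) \<Rightarrow>\<^sub>0 nat) \<Rightarrow>\<^sub>0 'k)" where
  "phi p = (\<Sum>\<alpha>\<in>Poly_Mapping.keys p. Poly_Mapping.single (xmonom \<alpha>) (Poly_Mapping.lookup p \<alpha>))"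

definition S_ring :: "nat list \<Rightarrow> ((nat list \<Rightarrow>\<^sub>0 nat) \<Rightarrow>\<^sub>0 'k::field) set" where
  "S_ring b = {p. \<forall>\<alpha>\<in>Poly_Mapping.keys p. Poly_Mapping.keys \<alpha> \<subseteq> box b}"

definition S_deg :: "nat list \<Rightarrow> nat \<Rightarrow> ((nat list \<Rightarrow>\<^sub>0 nat) \<Rightarrow>\<^sub>0 'k::field) set" where
  "S_deg b d = {p \<in> S_ring b. \<forall>\<alpha>\<in>Poly_Mapping.keys p. (\<Sum>v\<in>Poly_Mapping.keys \<alpha>. Poly_Mapping.lookup \<alpha> v) = d}"

definition J_ideal :: "nat list \<Rightarrow> ((nat list \<Rightarrow>\<^sub>0 nat) \<Rightarrow>\<^sub>0 'k::field) set" where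
  "J_ideal b = {p \<in> S_ring b. phi p = 0}"

(* Hilbert function of R = S/J: dim_K R_d = dim_K S_d - dim_K J_d *)
definition hilbert_fun :: "'k::field itself \<Rightarrow> nat list \<Rightarrow> nat \<Rightarrow> nat" where
  "hilbert_fun _ b d =
     vector_space.dim (pm_scale :: 'k \<Rightarrow> _) (S_deg b d :: ((nat list \<Rightarrow>\<^sub>0 nat) \<Rightarrow>\<^sub>0 'k) set)
   - vector_space.dim (pm_scale :: 'k \<Rightarrow> _) (S_deg b d \<inter> J_ideal b :: ((nat list \<Rightarrow>\<^sub>0 nat) \<Rightarrow>\<^sub>0 'k) set)"

definition hilbert_series :: "'k::field itself \<Rightarrow> nat list \<Rightarrow> rat fps" where
  "hilbert_series K b = Abs_fps (\<lambda>d. of_nat (hilbert_fun K b d))"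

end

theory Submission
  imports Defs
begin

text \<open>
  Every chain \<open>H\<close> of the box lies in an interval \<open>[G\<^sub>u, F\<^sub>u]\<close>: remove the largest element
  \<open>h\<close> of \<open>H\<close>, place the rest by induction in an interval of a word \<open>w\<close> whose lattice path
  ends at \<open>h\<close>, and append the missing letters in increasing order; the only new descent
  sits at \<open>h\<close>. The interval is unique: if \<open>u\<close> is lexicographically smaller than \<open>u'\<close>, first
  differing at position \<open>k\<close>, follow \<open>u'\<close> from \<open>k\<close> to the next point of \<open>H\<close>. There is no
  descent of \<open>u'\<close> on the way.

  A multichain supported in \<open>[G\<^sub>u, F\<^sub>u]\<close> of size \<open>d\<close> is \<open>G\<^sub>u\<close> plus a multiset of size
  \<open>d - desc u\<close> on the \<open>N + 1\<close> points of \<open>F\<^sub>u\<close>, which gives the series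
  \<open>t\<^bsup>desc u\<^esup> / (1 - t)\<^bsup>N+1\<^esup>\<close> for each word. Finally the monomials supported on chains form a
  basis of \<open>R\<close>: the image of a monomial determines exactly its coordinate marginals, and
  every family of marginals is realised by exactly one multichain (sort each marginal).
\<close>

lemma count_list_replicate: "count_list (replicate k x) y = (if x = y then k else 0)"
  by (induction k) auto

lemma nth_le_if_no_descent:
  fixes xs :: "'a::preorder list"
  assumes ascent: "\<And>j. k \<le> j \<Longrightarrow> Suc j < m \<Longrightarrow> xs ! j \<le> xs ! Suc j"
    and "k \<le> j" "j < m"
  shows "xs ! k \<le> xs ! j"
  using assms(2,3)
proof (induction j)
  case (Suc j)
  show ?case
  proof (cases "k = Suc j")
    case False
    then have "k \<le> j" "Suc j < m"
      using Suc.prems by auto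
    then show ?thesis
      using Suc.IH ascent[of j] by (meson Suc_lessD order_trans)
  qed simp
qed simp

lemma finite_chain_has_greatest:
  assumes "finite H" "H \<noteq> {}" "transp R" "\<forall>v\<in>H. \<forall>w\<in>H. R v w \<or> R w v"
  shows "\<exists>h\<in>H. \<forall>w\<in>H. R w h"
  using assms
proof (induction H rule: finite_ne_induct)
  case (insert x F)
  then obtain t where t: "t \<in> F" "\<forall>w\<in>F. R w t"
    by blast
  show ?case
  proof (cases "R t x")
    case True
    then have "\<forall>w\<in>F. R w x"
      using t(2) transpD[OF insert.prems(1)] by blast
    then show ?thesis
      using insert.prems(2) by blast
  next
    case False
    then show ?thesis
      using t insert.prems(2) by blast
  qed
qed blast

lemma card_multisets_between:
  assumes F: "finite F" and GF: "G \<subseteq> F"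
  shows "card {M. size M = d \<and> G \<subseteq> set_mset M \<and> set_mset M \<subseteq> F} =
    (if card G \<le> d then (card F + (d - card G) - 1) choose (d - card G) else 0)"
proof -
  define X where "X = {M. size M = d \<and> G \<subseteq> set_mset M \<and> set_mset M \<subseteq> F}"
  have "finite G"
    using F GF finite_subset by blast
  then have contains: "mset_set G \<subseteq># M" if "G \<subseteq> set_mset M" for M
    using that by (auto simp: subseteq_mset_def count_mset_set' Suc_le_eq)
  show ?thesis
  proof (cases "card G \<le> d")
    case True
    have "bij_betw (\<lambda>M. M + mset_set G) (multisets_of_size F (d - card G)) X"
    proof (rule bij_betw_byWitness[where f' = "\<lambda>M. M - mset_set G"])
      show "\<forall>M\<in>X. M - mset_set G + mset_set G = M"
        using contains by (simp add: X_def subset_mset.diff_add)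
      show "(\<lambda>M. M + mset_set G) ` multisets_of_size F (d - card G) \<subseteq> X"
        using True \<open>finite G\<close> GF by (auto simp: X_def multisets_of_size_def)
      show "(\<lambda>M. M - mset_set G) ` X \<subseteq> multisets_of_size F (d - card G)"
        using contains
        by (auto simp: X_def multisets_of_size_def size_Diff_submset dest: in_diffD)
    qed simp
    then have "card X = card (multisets_of_size F (d - card G))"
      by (simp add: bij_betw_same_card)
    then show ?thesis
      using True by (simp add: X_def card_multisets_of_size[OF F])
  next
    case False
    have "X = {}"
      using False contains size_mset_mono[of "mset_set G"] by (force simp: X_def)
    then have "card X = 0"
      by simp
    then show ?thesis
      using False by (simp add: X_def)
  qed
qed

lemma fps_X_power_mult_inverse_one_minus_X_power_nth:
  "(fps_X ^ k * inverse ((1 - fps_X) ^ Suc n) :: 'a::field_char_0 fps) $ d =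
    (if k \<le> d then of_nat ((n + (d - k)) choose (d - k)) else 0)"
proof -
  have "inverse ((1 - fps_X :: 'a fps) ^ Suc n) = Abs_fps (\<lambda>k. of_nat ((n + k) choose k))"
    using one_minus_const_fps_X_neg_power'[of "Suc n" 1] by simp
  then show ?thesis
    by (simp add: fps_X_power_mult_nth del: power_Suc)
qed

context Vector_Spaces.linear
begin

lemma independent_kernel_Un:
  assumes B: "vs1.independent B" "finite B" "\<forall>x\<in>B. f x = 0"
    and T: "finite T" "inj_on f T" "vs2.independent (f ` T)"
  shows "vs1.independent (B \<union> T)" "B \<inter> T = {}"
proof -
  show disjoint: "B \<inter> T = {}"
    using B(3) T(3) vs2.dependent_zero by fastforce
  have "u v = 0" if comb: "(\<Sum>v\<in>B \<union> T. u v *a v) = 0" and v: "v \<in> B \<union> T" for u v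
  proof -
    have split: "(\<Sum>v\<in>B. u v *a v) + (\<Sum>v\<in>T. u v *a v) = 0"
      using comb disjoint B(2) T(1) by (simp add: sum.union_disjoint)
    have "f (\<Sum>v\<in>B. u v *a v) = 0"
      by (simp add: sum scale B(3)[rule_format] cong: sum.cong)
    then have "f (\<Sum>v\<in>T. u v *a v) = 0"
      using arg_cong[OF split, of f] by (simp add: add)
    then have "(\<Sum>w\<in>f ` T. u (the_inv_into T f w) *b w) = 0"
      using T(2) by (simp add: sum scale sum.reindex the_inv_into_f_f)
    then have T0: "u v = 0" if "v \<in> T" for v
      using vs2.independentD[OF T(3) finite_imageI[OF T(1)] order_refl, of "\<lambda>w. u (the_inv_into T f w)" "f v"]
        that T(2)
      by (simp add: the_inv_into_f_f)
    then have "(\<Sum>v\<in>B. u v *a v) = 0"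
      using split by simp
    then show ?thesis
      using T0 vs1.independentD[OF B(1) B(2) order_refl] v by blast
  qed
  then show "vs1.independent (B \<union> T)"
    unfolding vs1.dependent_finite[OF finite_UnI[OF B(2) T(1)]] by blast
qed

lemma dim_eq_dim_kernel_add_card:
  assumes M: "finite M" "V \<subseteq> vs1.span M"
    and T: "finite T" "T \<subseteq> V" "inj_on f T" "vs2.independent (f ` T)"
    and spanning: "V \<subseteq> vs1.span (V \<inter> {x. f x = 0} \<union> T)"
  shows "vs1.dim V = vs1.dim (V \<inter> {x. f x = 0}) + card T"
proof -
  define K where "K = V \<inter> {x. f x = 0}"
  obtain B where B: "B \<subseteq> K" "vs1.independent B" "K \<subseteq> vs1.span B" "card B = vs1.dim K"
    by (rule vs1.basis_exists)
  have "finite B"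
    using vs1.independent_span_bound[OF M(1) B(2)] B(1) M(2) by (auto simp: K_def)
  have kernel: "\<forall>x\<in>B. f x = 0"
    using B(1) by (auto simp: K_def)
  have "card (B \<union> T) = vs1.dim V"
  proof (rule vs1.basis_card_eq_dim)
    show "B \<union> T \<subseteq> V"
      using B(1) T(2) by (auto simp: K_def)
    have "vs1.span (K \<union> T) \<subseteq> vs1.span (B \<union> T)"
      using B(3) by (intro vs1.span_minimal) (auto intro: vs1.span_base vs1.span_mono[THEN subsetD])
    then show "V \<subseteq> vs1.span (B \<union> T)"
      using spanning by (auto simp: K_def)
    show "vs1.independent (B \<union> T)"
      by (rule independent_kernel_Un(1)[OF B(2) \<open>finite B\<close> kernel T(1,3,4)])
  qed
  moreover have "card (B \<union> T) = card B + card T"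
    using independent_kernel_Un(2)[OF B(2) \<open>finite B\<close> kernel T(1,3,4)] \<open>finite B\<close> T(1)
    by (simp add: card_Un_disjoint)
  ultimately show ?thesis
    using B(4) by (simp add: K_def)
qed

end

section \<open>Lattice paths of words\<close>

lemma length_pt [simp]: "length (pt b u m) = length b"
  by (simp add: pt_def)

lemma nth_pt [simp]: "i < length b \<Longrightarrow> pt b u m ! i = count_list (take m u) i"
  by (simp add: pt_def)

lemma words_length: "u \<in> words c \<Longrightarrow> length u = sum_list c"
  by (simp add: words_def)

lemma words_letters: "u \<in> words c \<Longrightarrow> set u \<subseteq> {..<length c}"
  by (simp add: words_def)

lemma words_count: "u \<in> words c \<Longrightarrow> i < length c \<Longrightarrow> count_list u i = c ! i"
  by (simp add: words_def)

lemma wordsI: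
  assumes letters: "set u \<subseteq> {..<length c}"
    and count: "\<And>i. i < length c \<Longrightarrow> count_list u i = c ! i"
  shows "u \<in> words c"
proof -
  have "length u = (\<Sum>i<length c. count_list u i)"
    using sum_count_set[OF letters] by simp
  also have "\<dots> = sum_list c"
    by (simp add: count sum_list_sum_nth atLeast0LessThan)
  finally show ?thesis
    using assms by (simp add: words_def)
qed

lemma finite_words: "finite (words c)"
proof (rule finite_subset)
  show "words c \<subseteq> {u. set u \<subseteq> {..<length c} \<and> length u = sum_list c}"
    by (auto simp: words_def)
qed (rule finite_lists_length_eq, simp)

lemma finite_box: "finite (box c)"
proof (rule finite_subset)
  show "box c \<subseteq> {v. set v \<subseteq> {..sum_list c} \<and> length v = length c}"
  proof safe
    fix v x assume "v \<in> box c" "x \<in> set v"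
    then obtain i where "i < length c" "x = v ! i" "v ! i \<le> c ! i"
      by (auto simp: box_def in_set_conv_nth)
    then show "x \<le> sum_list c"
      using elem_le_sum_list[of i c] by simp
  qed (simp add: box_def)
qed (simp add: finite_lists_length_eq)

lemma sum_list_pt: "set u \<subseteq> {..<length b} \<Longrightarrow> sum_list (pt b u m) = min m (length u)"
  using sum_count_set[of "take m u" "{..<length b}"] set_take_subset[of m u]
  by (simp add: pt_def interv_sum_list_conv_sum_set_nat atLeast0LessThan)

lemma pt_append: "m \<le> length w \<Longrightarrow> pt b (w @ s) m = pt b w m"
  by (simp add: pt_def)

lemma pt_length_words: "u \<in> words c \<Longrightarrow> length c = length b \<Longrightarrow> pt b u (length u) = c"
  by (rule nth_equalityI) (simp_all add: words_count)

lemma cle_pt_mono: "m \<le> m' \<Longrightarrow> cle b (pt b u m) (pt b u m')"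
  using take_add[of m "m' - m" u] by (simp add: cle_def)

lemma transp_cle: "transp (cle b)"
  by (auto simp: cle_def transp_def intro: order_trans)

lemma pt_in_box: "u \<in> words b \<Longrightarrow> pt b u m \<in> box b"
  using count_list_append[of "take m u" "drop m u"] by (simp add: box_def flip: words_count)

lemma Fu_in_init_complex: "u \<in> words b \<Longrightarrow> Fu b u \<in> init_complex b"
  unfolding init_complex_def Fu_def
  using pt_in_box cle_pt_mono nat_le_linear by (simp add: image_subset_iff) metis

lemma Gu_subset_Fu: "Gu b u \<subseteq> Fu b u"
  by (force simp: Gu_def Fu_def)

lemma Fu_eq_pt_sum_list: "u \<in> words b \<Longrightarrow> v \<in> Fu b u \<Longrightarrow> v = pt b u (sum_list v)"
  by (auto simp: Fu_def sum_list_pt words_letters)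

lemma inj_on_pt: "u \<in> words b \<Longrightarrow> inj_on (pt b u) {0..length u}"
  by (rule inj_on_inverseI[of _ sum_list]) (simp add: sum_list_pt words_letters)

lemma card_Fu: "u \<in> words b \<Longrightarrow> card (Fu b u) = sum_list b + 1"
  using inj_on_pt[of u b] by (simp add: Fu_def card_image words_length)

lemma card_Gu:
  assumes u: "u \<in> words b"
  shows "card (Gu b u) = desc u"
proof -
  define D where "D = {j. Suc j < length u \<and> u ! Suc j < u ! j}"
  have "Gu b u = pt b u ` Suc ` D"
    by (auto simp: Gu_def D_def)
  moreover have "inj_on (pt b u) (Suc ` D)"
    using inj_on_pt[OF u] by (rule inj_on_subset) (auto simp: D_def)
  ultimately show ?thesis
    by (simp add: card_image desc_def D_def[symmetric])
qed

lemma init_complex_subset: "F \<in> init_complex b \<Longrightarrow> H \<subseteq> F \<Longrightarrow> H \<in> init_complex b"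
  unfolding init_complex_def by blast

lemma finite_Fu: "finite (Fu b u)"
  by (simp add: Fu_def)

lemma face_interval_Gu_Fu:
  "u \<in> words b \<Longrightarrow> face_interval b (Gu b u) (Fu b u) = {H. Gu b u \<subseteq> H \<and> H \<subseteq> Fu b u}"
  by (auto simp: face_interval_def intro: init_complex_subset[OF Fu_in_init_complex])

section \<open>The initial complex as a disjoint union of intervals\<close>

lemma pt_eq_if_pt_in_Fu:
  assumes u: "u \<in> words b" and u': "u' \<in> words b"
    and "m \<le> length u'" "pt b u' m \<in> Fu b u"
  shows "pt b u m = pt b u' m"
  using Fu_eq_pt_sum_list[OF u assms(4)] sum_list_pt[OF words_letters[OF u']] assms(3) by simp

lemma pt_neq_if_letter_skipped:
  assumes u: "u \<in> words b" and k: "k < length u" "take k u = take k u'"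
    and m: "k < m" "m \<le> length u'"
    and skipped: "\<And>j. k \<le> j \<Longrightarrow> j < m \<Longrightarrow> u ! k < u' ! j"
  shows "pt b u m \<noteq> pt b u' m"
proof
  assume same_point: "pt b u m = pt b u' m"
  define a where "a = u ! k"
  have a: "a < length b"
    using words_letters[OF u] nth_mem[OF k(1)] by (auto simp: a_def)
  have "a \<notin> set (take (m - k) (drop k u'))"
  proof
    assume "a \<in> set (take (m - k) (drop k u'))"
    then obtain i where "i < m - k" "u' ! (k + i) = a"
      using m by (auto simp: in_set_conv_nth)
    then show False
      using skipped[of "k + i"] by (simp add: a_def less_diff_conv)
  qed
  then have "count_list (take m u') a = count_list (take k u') a"
    using take_add[of k "m - k" u'] m by (simp add: count_list_0_iff)
  moreover have "count_list (take k u) a < count_list (take m u) a"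
    using take_add[of "Suc k" "m - Suc k" u] k m
    by (simp add: a_def take_Suc_conv_app_nth)
  ultimately show False
    using same_point nth_pt[OF a, of u m] nth_pt[OF a, of u' m] k(2) by simp
qed

lemma no_face_between_lex_smaller:
  assumes u: "u \<in> words b" and u': "u' \<in> words b"
    and lex: "(u, u') \<in> lex {(x, y). x < y}"
    and H: "H \<subseteq> Fu b u"
  shows "\<not> Gu b u' \<subseteq> H"
proof
  assume G': "Gu b u' \<subseteq> H"
  obtain k where k: "k < length u" "take k u = take k u'" "u ! k < u' ! k"
    using lex_take_index[OF lex] by auto
  define N where "N = length u"
  have lu': "length u' = N"
    using u u' by (simp add: N_def words_length)
  txt \<open>\<open>m\<close> is the first position after \<open>k\<close> where the path of \<open>u'\<close> meets \<open>H\<close> again.\<close>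
  define P where "P m \<longleftrightarrow> k < m \<and> (m = N \<or> pt b u' m \<in> H)" for m
  define m where "m = (LEAST m. P m)"
  have "P N"
    using k by (simp add: P_def N_def)
  then have Pm: "P m" and mN: "m \<le> N"
    unfolding m_def by (rule LeastI, rule Least_le)
  have outside: "pt b u' j \<notin> H" if "k < j" "j < m" for j
    using not_less_Least[of j P] that mN by (auto simp: P_def m_def)
  have ascent: "u' ! j \<le> u' ! Suc j" if "k \<le> j" "Suc j < m" for j
  proof (rule ccontr)
    assume "\<not> u' ! j \<le> u' ! Suc j"
    then have "pt b u' (Suc j) \<in> Gu b u'"
      using that mN lu' by (auto simp: Gu_def)
    then show False
      using G' outside[of "Suc j"] that by auto
  qed
  have "pt b u' m \<in> Fu b u"
  proof (cases "m = N")
    case True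
    then have "pt b u' m = pt b u N"
      using pt_length_words[OF u refl] pt_length_words[OF u' refl] lu' N_def by simp
    then show ?thesis
      by (auto simp: Fu_def N_def)
  qed (use Pm H in \<open>auto simp: P_def\<close>)
  then have "pt b u m = pt b u' m"
    using pt_eq_if_pt_in_Fu[OF u u'] mN lu' by simp
  moreover have "u ! k < u' ! j" if "k \<le> j" "j < m" for j
    using nth_le_if_no_descent[OF ascent that] k(3) by simp
  ultimately show False
    using pt_neq_if_letter_skipped[OF u k(1,2)] Pm mN lu' by (auto simp: P_def)
qed

lemma eq_if_face_intervals_meet:
  assumes u: "u \<in> words b" and u': "u' \<in> words b"
    and "H \<subseteq> Fu b u" "Gu b u \<subseteq> H" "H \<subseteq> Fu b u'" "Gu b u' \<subseteq> H"
  shows "u = u'"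
proof -
  have "length u = length u'"
    using u u' by (simp add: words_length)
  moreover have "(u, u') \<in> lexord {(x, y). x < y} \<or> u = u' \<or> (u', u) \<in> lexord {(x, y). x < y}"
    by (rule lexord_linear) auto
  ultimately have "(u, u') \<in> lex {(x, y). x < y} \<or> u = u' \<or> (u', u) \<in> lex {(x, y). x < y}"
    by (auto simp: lexord_lex)
  then show ?thesis
    using no_face_between_lex_smaller[OF u u'] no_face_between_lex_smaller[OF u' u] assms(3-6)
    by blast
qed

lemma face_intervals_disjoint:
  "u \<in> words b \<Longrightarrow> u' \<in> words b \<Longrightarrow> u \<noteq> u' \<Longrightarrow>
     face_interval b (Gu b u) (Fu b u) \<inter> face_interval b (Gu b u') (Fu b u') = {}"
  unfolding face_interval_def using eq_if_face_intervals_meet by blast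

definition sorted_word :: "nat list \<Rightarrow> nat list" where
  "sorted_word c = concat (map (\<lambda>i. replicate (c ! i) i) [0..<length c])"

lemma sorted_word_in_words: "sorted_word c \<in> words c"
proof -
  have "count_list (concat (map (\<lambda>i. replicate (f i) i) [0..<n])) j = (if j < n then f j else 0)"
    and "set (concat (map (\<lambda>i. replicate (f i) i) [0..<n])) \<subseteq> {..<n}" for f n j
    by (induction n) (auto simp: count_list_replicate)
  then show ?thesis
    unfolding sorted_word_def by (intro wordsI) auto
qed

lemma sorted_sorted_word: "sorted (sorted_word c)"
proof -
  have "sorted (concat (map (\<lambda>i. replicate (f i) i) [0..<n]))" for f :: "nat \<Rightarrow> nat" and n
    by (induction n) (auto simp: sorted_append)
  then show ?thesis
    by (simp add: sorted_word_def)
qed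

lemma Gu_sorted:
  assumes "sorted s"
  shows "Gu b s = {}"
proof -
  have "\<not> s ! Suc j < s ! j" if "Suc j < length s" for j
    using sorted_nth_mono[OF assms, of j "Suc j"] that by simp
  then show ?thesis
    by (auto simp: Gu_def)
qed

lemma Fu_subset_Fu_append: "Fu b w \<subseteq> Fu b (w @ s)"
proof -
  have "Fu b w = pt b (w @ s) ` {0..length w}"
    unfolding Fu_def by (rule image_cong) (auto simp: pt_append)
  also have "\<dots> \<subseteq> Fu b (w @ s)"
    unfolding Fu_def by (rule image_mono) auto
  finally show ?thesis .
qed

lemma Gu_append_sorted:
  assumes "sorted s"
  shows "Gu b (w @ s) \<subseteq> Gu b w \<union> {pt b w (length w)}"
proof
  fix x assume "x \<in> Gu b (w @ s)"
  then obtain j where j: "x = pt b (w @ s) (Suc j)" "Suc j < length (w @ s)"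
    "(w @ s) ! Suc j < (w @ s) ! j"
    by (auto simp: Gu_def)
  consider "Suc j < length w" | "Suc j = length w" | "length w < Suc j"
    by linarith
  then show "x \<in> Gu b w \<union> {pt b w (length w)}"
  proof cases
    case 1
    then show ?thesis
      using j by (auto simp: Gu_def pt_append nth_append)
  next
    case 2
    then show ?thesis
      using j by (simp add: pt_append)
  next
    case 3
    then have "s ! Suc (j - length w) < s ! (j - length w)" "Suc (j - length w) < length s"
      using j by (auto simp: nth_append Suc_diff_le)
    then show ?thesis
      using sorted_nth_mono[OF assms, of "j - length w" "Suc (j - length w)"] by simp
  qed
qed

lemma append_sorted_word_in_words:
  assumes w: "w \<in> words h" and h: "h \<in> box c"
  shows "w @ sorted_word (map (\<lambda>i. c ! i - h ! i) [0..<length c]) \<in> words c"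
proof (rule wordsI)
  define d where "d = map (\<lambda>i. c ! i - h ! i) [0..<length c]"
  show "set (w @ sorted_word d) \<subseteq> {..<length c}"
    using words_letters[OF w] words_letters[OF sorted_word_in_words[of d]] h
    by (auto simp: d_def box_def)
  show "count_list (w @ sorted_word d) i = c ! i" if "i < length c" for i
    using words_count[OF w] words_count[OF sorted_word_in_words[of d]] that h
    by (simp add: d_def box_def)
qed

lemma chain_in_face_interval:
  assumes "length c = length b" "H \<subseteq> box c" "\<forall>v\<in>H. \<forall>w\<in>H. cle b v w \<or> cle b w v"
  shows "\<exists>u\<in>words c. H \<subseteq> Fu b u \<and> Gu b u \<subseteq> H"
proof -
  have "finite H"
    using assms(2) finite_box finite_subset by blast
  then show ?thesis
    using assms
  proof (induction H arbitrary: c rule: finite_psubset_induct)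
    case (psubset H)
    note lc = psubset.prems(1) and Hc = psubset.prems(2) and chain = psubset.prems(3)
    show ?case
    proof (cases "H = {}")
      case True
      then show ?thesis
        using sorted_word_in_words Gu_sorted[OF sorted_sorted_word] by blast
    next
      case False
      obtain h where h: "h \<in> H" "\<forall>w\<in>H. cle b w h"
        using finite_chain_has_greatest[OF psubset.hyps(1) False transp_cle chain] by blast
      have hc: "h \<in> box c"
        using h Hc by blast
      have "H - {h} \<subseteq> box h"
        using h Hc hc lc by (auto simp: box_def cle_def)
      moreover have "length h = length b"
        using hc lc by (simp add: box_def)
      ultimately obtain w where w: "w \<in> words h" "H - {h} \<subseteq> Fu b w" "Gu b w \<subseteq> H - {h}"
        using psubset.IH[of "H - {h}" h] h chain by blast
      define u where "u = w @ sorted_word (map (\<lambda>i. c ! i - h ! i) [0..<length c])"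
      have "u \<in> words c"
        unfolding u_def using w(1) hc by (rule append_sorted_word_in_words)
      moreover have "h \<in> Fu b w"
        using pt_length_words[OF w(1) \<open>length h = length b\<close>] by (force simp: Fu_def)
      then have "H \<subseteq> Fu b u"
        using w(2) Fu_subset_Fu_append by (fastforce simp: u_def)
      moreover have "Gu b u \<subseteq> H"
        using Gu_append_sorted[OF sorted_sorted_word] w(3) h(1)
          pt_length_words[OF w(1) \<open>length h = length b\<close>]
        by (fastforce simp: u_def)
      ultimately show ?thesis
        by blast
    qed
  qed
qed

lemma init_complex_eq_Union_face_intervals:
  "init_complex b = (\<Union>u\<in>words b. face_interval b (Gu b u) (Fu b u))"
proof
  show "init_complex b \<subseteq> (\<Union>u\<in>words b. face_interval b (Gu b u) (Fu b u))"
    using chain_in_face_interval[of b b] by (fastforce simp: init_complex_def face_interval_def)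
qed (auto simp: face_interval_def)

section \<open>Counting multichains\<close>

text \<open>Multichains of size \<open>d\<close> index the standard monomials of degree \<open>d\<close>.\<close>

definition multichains :: "nat list \<Rightarrow> nat \<Rightarrow> nat list multiset set" where
  "multichains b d = {M. set_mset M \<in> init_complex b \<and> size M = d}"

lemma card_multichains:
  "card (multichains b d) =
    (\<Sum>u\<in>words b. if desc u \<le> d then (sum_list b + (d - desc u)) choose (d - desc u) else 0)"
proof -
  define X where "X u = {M. size M = d \<and> Gu b u \<subseteq> set_mset M \<and> set_mset M \<subseteq> Fu b u}" for u
  have "multichains b d = (\<Union>u\<in>words b. X u)"
    using init_complex_eq_Union_face_intervals[of b]
    by (auto simp: multichains_def X_def face_interval_Gu_Fu)
  moreover have "finite (X u)" for u
  proof (rule finite_subset)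
    show "X u \<subseteq> multisets_of_size (Fu b u) d"
      by (auto simp: X_def multisets_of_size_def)
  qed (auto simp: finite_Fu)
  moreover have "X u \<inter> X u' = {}" if "u \<in> words b" "u' \<in> words b" "u \<noteq> u'" for u u'
    using face_intervals_disjoint[OF that] that by (auto simp: X_def face_interval_Gu_Fu)
  ultimately have "card (multichains b d) = (\<Sum>u\<in>words b. card (X u))"
    by (simp add: card_UN_disjoint finite_words)
  also have "\<dots> = (\<Sum>u\<in>words b.
      if desc u \<le> d then (sum_list b + (d - desc u)) choose (d - desc u) else 0)"
    unfolding X_def
    by (intro sum.cong refl, subst card_multisets_between)
      (auto simp: finite_Fu Gu_subset_Fu card_Fu card_Gu)
  finally show ?thesis .
qed

lemma fps_card_multichains:
  "Abs_fps (\<lambda>d. of_nat (card (multichains b d))) =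
    fps_of_poly (A_poly b) / (1 - fps_X) ^ (sum_list b + 1)"
proof (rule fps_ext)
  fix d
  have "fps_of_poly (A_poly b) / (1 - fps_X) ^ (sum_list b + 1) =
      (\<Sum>u\<in>words b. fps_X ^ desc u * inverse ((1 - fps_X) ^ Suc (sum_list b)))"
    by (simp add: A_poly_def fps_of_poly_sum fps_of_poly_monom' fps_divide_unit sum_distrib_right
        del: power_Suc)
  then show "Abs_fps (\<lambda>d. of_nat (card (multichains b d))) $ d =
      (fps_of_poly (A_poly b) / (1 - fps_X) ^ (sum_list b + 1)) $ d"
    by (simp add: fps_sum_nth fps_X_power_mult_inverse_one_minus_X_power_nth card_multichains
        of_nat_sum if_distrib cong: if_cong del: power_Suc)
qed

lemma coeff_A_poly: "coeff (A_poly b) k = of_nat (newcomb b k)"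
  using finite_words[of b]
  by (simp add: A_poly_def newcomb_def coeff_sum coeff_monom sum.If_cases Int_def)

section \<open>Monomials as multisets of lattice points\<close>

definition pm_of_mset :: "'a multiset \<Rightarrow> 'a \<Rightarrow>\<^sub>0 nat" where
  "pm_of_mset M = Abs_poly_mapping (count M)"

definition mset_of_pm :: "('a \<Rightarrow>\<^sub>0 nat) \<Rightarrow> 'a multiset" where
  "mset_of_pm \<alpha> = Abs_multiset (Poly_Mapping.lookup \<alpha>)"

lemma lookup_pm_of_mset [simp]: "Poly_Mapping.lookup (pm_of_mset M) = count M"
proof -
  have "finite {x. count M x \<noteq> 0}"
    by (simp flip: set_mset_def[unfolded Collect_conj_eq])
  then show ?thesis
    by (simp add: pm_of_mset_def Abs_poly_mapping_inverse)
qed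

lemma count_mset_of_pm [simp]: "count (mset_of_pm \<alpha>) = Poly_Mapping.lookup \<alpha>"
proof -
  have "finite {x. 0 < Poly_Mapping.lookup \<alpha> x}"
    using finite_keys[of \<alpha>] by (simp add: in_keys_iff flip: not_gr_zero)
  then show ?thesis
    by (simp add: mset_of_pm_def Abs_multiset_inverse)
qed

lemma pm_of_mset_mset_of_pm [simp]: "pm_of_mset (mset_of_pm \<alpha>) = \<alpha>"
  by (rule poly_mapping_eqI) simp

lemma mset_of_pm_pm_of_mset [simp]: "mset_of_pm (pm_of_mset M) = M"
  by (rule multiset_eqI) simp

lemma inj_pm_of_mset: "inj pm_of_mset"
  by (metis injI mset_of_pm_pm_of_mset)

lemma keys_pm_of_mset [simp]: "Poly_Mapping.keys (pm_of_mset M) = set_mset M"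
  by (auto simp: in_keys_iff)

lemma degree_pm_of_mset: "(\<Sum>v\<in>Poly_Mapping.keys (pm_of_mset M). Poly_Mapping.lookup (pm_of_mset M) v) = size M"
  by (simp add: size_multiset_overloaded_eq)

lemma monomial_of_degree_iff:
  "\<alpha> \<in> pm_of_mset ` multisets_of_size A d \<longleftrightarrow>
    Poly_Mapping.keys \<alpha> \<subseteq> A \<and> (\<Sum>v\<in>Poly_Mapping.keys \<alpha>. Poly_Mapping.lookup \<alpha> v) = d"
proof
  assume "\<alpha> \<in> pm_of_mset ` multisets_of_size A d"
  then show "Poly_Mapping.keys \<alpha> \<subseteq> A \<and> (\<Sum>v\<in>Poly_Mapping.keys \<alpha>. Poly_Mapping.lookup \<alpha> v) = d"
    by (auto simp: multisets_of_size_def size_multiset_overloaded_eq)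
next
  assume "Poly_Mapping.keys \<alpha> \<subseteq> A \<and> (\<Sum>v\<in>Poly_Mapping.keys \<alpha>. Poly_Mapping.lookup \<alpha> v) = d"
  then have "mset_of_pm \<alpha> \<in> multisets_of_size A d"
    using degree_pm_of_mset[of "mset_of_pm \<alpha>"] keys_pm_of_mset[of "mset_of_pm \<alpha>"]
    by (simp add: multisets_of_size_def)
  then show "\<alpha> \<in> pm_of_mset ` multisets_of_size A d"
    by (rule rev_image_eqI) simp
qed

lemma lookup_xmonom_pm_of_mset:
  assumes "set_mset M \<subseteq> box b"
  shows "Poly_Mapping.lookup (xmonom (pm_of_mset M)) (i, j) =
    (if i < length b then count (image_mset (\<lambda>v. v ! i) M) j else 0)"
proof -
  have len: "length v = length b" if "v \<in># M" for v
    using assms that by (auto simp: box_def)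
  have single: "(\<Sum>i'<length v. Poly_Mapping.lookup (Poly_Mapping.single (i', v ! i') (count M v)) (i, j)) =
      (if i < length v \<and> v ! i = j then count M v else 0)" for v
    by (simp add: lookup_single when_def sum.delta' cong: conj_cong)
  have "Poly_Mapping.lookup (xmonom (pm_of_mset M)) (i, j) =
      (\<Sum>v\<in>set_mset M. \<Sum>i'<length v. Poly_Mapping.lookup (Poly_Mapping.single (i', v ! i') (count M v)) (i, j))"
    by (simp add: xmonom_def lookup_sum)
  also have "\<dots> = (\<Sum>v\<in>set_mset M. if i < length b \<and> v ! i = j then count M v else 0)"
    using len by (intro sum.cong refl) (subst single, simp)
  finally have "Poly_Mapping.lookup (xmonom (pm_of_mset M)) (i, j) =
      (\<Sum>v\<in>set_mset M. if i < length b \<and> v ! i = j then count M v else 0)" .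
  then show ?thesis
    by (simp add: count_image_mset' sum.If_cases Int_def conj_commute eq_commute)
qed

lemma xmonom_pm_of_mset_eq_iff:
  assumes "set_mset M \<subseteq> box b" "set_mset M' \<subseteq> box b"
  shows "xmonom (pm_of_mset M) = xmonom (pm_of_mset M') \<longleftrightarrow>
    (\<forall>i<length b. image_mset (\<lambda>v. v ! i) M = image_mset (\<lambda>v. v ! i) M')"
proof
  assume eq: "xmonom (pm_of_mset M) = xmonom (pm_of_mset M')"
  show "\<forall>i<length b. image_mset (\<lambda>v. v ! i) M = image_mset (\<lambda>v. v ! i) M'"
  proof (intro allI impI multiset_eqI)
    fix i j assume "i < length b"
    then show "count (image_mset (\<lambda>v. v ! i) M) j = count (image_mset (\<lambda>v. v ! i) M') j"
      using eq lookup_xmonom_pm_of_mset[OF assms(1), of i j] lookup_xmonom_pm_of_mset[OF assms(2), of i j]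
      by simp
  qed
next
  assume "\<forall>i<length b. image_mset (\<lambda>v. v ! i) M = image_mset (\<lambda>v. v ! i) M'"
  then show "xmonom (pm_of_mset M) = xmonom (pm_of_mset M')"
    using lookup_xmonom_pm_of_mset[OF assms(1)] lookup_xmonom_pm_of_mset[OF assms(2)]
    by (intro poly_mapping_eqI) (simp add: split_paired_all)
qed

lemma chain_has_least:
  assumes "H \<in> init_complex b" "H \<noteq> {}"
  shows "\<exists>v\<in>H. \<forall>w\<in>H. cle b v w"
proof -
  have "finite H"
    using assms(1) finite_box finite_subset by (auto simp: init_complex_def)
  then show ?thesis
    using finite_chain_has_greatest[of H "(cle b)\<inverse>\<inverse>"] assms transp_cle
    by (auto simp: init_complex_def)
qed

lemma nth_least_eq_Min:
  assumes "v \<in># M" "\<forall>w\<in>#M. cle b v w" "i < length b"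
  shows "v ! i = Min ((\<lambda>w. w ! i) ` set_mset M)"
  using assms by (intro Min_eqI[symmetric]) (auto simp: cle_def)

lemma least_elements_eq_if_marginals_eq:
  assumes chain: "set_mset M \<in> init_complex b" "set_mset M' \<in> init_complex b"
    and marginals: "\<forall>i<length b. image_mset (\<lambda>v. v ! i) M = image_mset (\<lambda>v. v ! i) M'"
    and v: "v \<in># M" "\<forall>w\<in>#M. cle b v w" and v': "v' \<in># M'" "\<forall>w\<in>#M'. cle b v' w"
  shows "v = v'"
proof (rule nth_equalityI)
  show "length v = length v'"
    using v(1) v'(1) chain by (force simp: init_complex_def box_def)
  show "v ! i = v' ! i" if "i < length v" for i
  proof -
    have "i < length b"
      using that v(1) chain(1) by (auto simp: init_complex_def box_def)
    then have "(\<lambda>w. w ! i) ` set_mset M = (\<lambda>w. w ! i) ` set_mset M'"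
      using marginals by (metis set_image_mset)
    then show ?thesis
      using nth_least_eq_Min[OF v \<open>i < length b\<close>] nth_least_eq_Min[OF v' \<open>i < length b\<close>] by simp
  qed
qed

lemma multichain_eqI:
  assumes "set_mset M \<in> init_complex b" "set_mset M' \<in> init_complex b" "size M = size M'"
    and "\<forall>i<length b. image_mset (\<lambda>v. v ! i) M = image_mset (\<lambda>v. v ! i) M'"
  shows "M = M'"
  using assms
proof (induction "size M" arbitrary: M M')
  case (Suc d)
  note chain = Suc.prems(1,2) and marginals = Suc.prems(4)
  have "M \<noteq> {#}" "M' \<noteq> {#}"
    using Suc.hyps(2) Suc.prems(3) by auto
  then obtain v v' where v: "v \<in># M" "\<forall>w\<in>#M. cle b v w" and v': "v' \<in># M'" "\<forall>w\<in>#M'. cle b v' w"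
    using chain_has_least[OF chain(1)] chain_has_least[OF chain(2)] by (metis set_mset_eq_empty_iff)
  have "v = v'"
    by (rule least_elements_eq_if_marginals_eq[OF chain marginals v v'])
  have "M - {#v#} = M' - {#v#}"
  proof (rule Suc.hyps(1))
    show "d = size (M - {#v#})"
      using Suc.hyps(2) v(1) by (simp add: size_Diff_singleton)
    show "set_mset (M - {#v#}) \<in> init_complex b"
      using chain(1) by (rule init_complex_subset) (auto dest: in_diffD)
    show "set_mset (M' - {#v#}) \<in> init_complex b"
      using chain(2) by (rule init_complex_subset) (auto dest: in_diffD)
    show "size (M - {#v#}) = size (M' - {#v#})"
      using Suc.prems(3) v(1) v'(1) \<open>v = v'\<close> by (simp add: size_Diff_singleton)
    show "\<forall>i<length b. image_mset (\<lambda>v. v ! i) (M - {#v#}) = image_mset (\<lambda>v. v ! i) (M' - {#v#})"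
      using marginals v(1) v'(1) \<open>v = v'\<close> by (simp add: image_mset_Diff)
  qed
  then show ?case
    using v(1) v'(1) \<open>v = v'\<close> by (metis insert_DiffM)
qed simp

text \<open>Sorting each marginal and reading the sorted lists in parallel turns any multiset of
  lattice points into a multichain with the same marginals.\<close>

lemma multichain_exists:
  assumes M: "set_mset M \<subseteq> box b"
  shows "\<exists>M'. set_mset M' \<in> init_complex b \<and> size M' = size M \<and>
    (\<forall>i<length b. image_mset (\<lambda>v. v ! i) M' = image_mset (\<lambda>v. v ! i) M)"
proof -
  define L where "L i = sorted_list_of_multiset (image_mset (\<lambda>v. v ! i) M)" for i
  define w where "w k = map (\<lambda>i. L i ! k) [0..<length b]" for k
  define M' where "M' = mset (map w [0..<size M])"
  have length_L: "length (L i) = size M" for i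
    by (metis L_def mset_sorted_list_of_multiset size_image_mset size_mset)
  have nth_w: "w k ! i = L i ! k" if "i < length b" for i k
    using that by (simp add: w_def)
  have marginals: "image_mset (\<lambda>v. v ! i) M' = image_mset (\<lambda>v. v ! i) M" if "i < length b" for i
  proof -
    have "image_mset (\<lambda>v. v ! i) M' = mset (map (\<lambda>k. L i ! k) [0..<size M])"
      using nth_w[OF that] by (simp add: M'_def multiset.map_comp o_def)
    also have "\<dots> = mset (L i)"
      by (metis length_L map_nth)
    finally show ?thesis
      by (simp add: L_def)
  qed
  have "w k \<in> box b" if "k < size M" for k
  proof -
    have "L i ! k \<le> b ! i" if "i < length b" for i
    proof -
      have "L i ! k \<in># image_mset (\<lambda>v. v ! i) M"
        using length_L[of i] \<open>k < size M\<close> by (metis L_def nth_mem set_sorted_list_of_multiset)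
      then show ?thesis
        using M that by (auto simp: box_def)
    qed
    then show ?thesis
      by (simp add: box_def w_def)
  qed
  moreover have "cle b (w k) (w k')" if "k \<le> k'" "k' < size M" for k k'
    using that length_L by (simp add: cle_def nth_w sorted_nth_mono L_def)
  ultimately have "set_mset M' \<in> init_complex b"
    by (simp add: M'_def init_complex_def image_subset_iff) (meson atLeastLessThan_iff nat_le_linear)
  moreover have "size M' = size M"
    by (simp add: M'_def)
  ultimately show ?thesis
    using marginals by blast
qed

lemma lookup_pm_scale [simp]: "Poly_Mapping.lookup (pm_scale c p) k = c * Poly_Mapping.lookup p k"
  by (simp add: pm_scale_def Poly_Mapping.map.rep_eq when_def)

interpretation pm_vs: vector_space "pm_scale :: 'k::field \<Rightarrow> ('m \<Rightarrow>\<^sub>0 'k) \<Rightarrow> ('m \<Rightarrow>\<^sub>0 'k)"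
  by unfold_locales (auto intro!: poly_mapping_eqI simp: lookup_add algebra_simps)

lemma pm_scale_single: "pm_scale c (Poly_Mapping.single x a) = Poly_Mapping.single x (c * a)"
  by (rule poly_mapping_eqI) (simp add: lookup_single when_def)

lemma pm_expansion:
  "p = (\<Sum>\<alpha>\<in>Poly_Mapping.keys p. pm_scale (Poly_Mapping.lookup p \<alpha>) (Poly_Mapping.single \<alpha> (1::'k::field)))"
proof (rule poly_mapping_eqI)
  fix k
  have "Poly_Mapping.lookup (\<Sum>\<alpha>\<in>Poly_Mapping.keys p.
      pm_scale (Poly_Mapping.lookup p \<alpha>) (Poly_Mapping.single \<alpha> (1::'k))) k =
      (\<Sum>\<alpha>\<in>Poly_Mapping.keys p. if \<alpha> = k then Poly_Mapping.lookup p \<alpha> else 0)"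
    unfolding lookup_sum lookup_pm_scale lookup_single when_def by (intro sum.cong) auto
  then show "Poly_Mapping.lookup p k = Poly_Mapping.lookup (\<Sum>\<alpha>\<in>Poly_Mapping.keys p.
      pm_scale (Poly_Mapping.lookup p \<alpha>) (Poly_Mapping.single \<alpha> (1::'k))) k"
    by (simp add: in_keys_iff)
qed

lemma span_monomialsI:
  assumes "\<forall>\<alpha>\<in>Poly_Mapping.keys p. Poly_Mapping.single \<alpha> (1::'k::field) \<in> pm_vs.span X"
  shows "p \<in> pm_vs.span X"
proof -
  have "(\<Sum>\<alpha>\<in>Poly_Mapping.keys p. pm_scale (Poly_Mapping.lookup p \<alpha>) (Poly_Mapping.single \<alpha> 1))
      \<in> pm_vs.span X"
    using assms by (intro pm_vs.span_sum pm_vs.span_scale) auto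
  then show ?thesis
    by (simp only: pm_expansion[of p, symmetric])
qed

lemma single_one_eq_iff:
  "Poly_Mapping.single \<alpha> (1::'a::zero_neq_one) = Poly_Mapping.single \<beta> 1 \<longleftrightarrow> \<alpha> = \<beta>"
  by (metis lookup_single_eq lookup_single_not_eq zero_neq_one)

lemma independent_monomials: "pm_vs.independent ((\<lambda>\<alpha>. Poly_Mapping.single \<alpha> (1::'k::field)) ` A)"
proof (unfold pm_vs.independent_explicit_module, intro allI impI)
  fix t u v
  assume t: "finite t" "t \<subseteq> (\<lambda>\<alpha>. Poly_Mapping.single \<alpha> (1::'k)) ` A"
    and comb: "(\<Sum>v\<in>t. pm_scale (u v) v) = 0" and v: "v \<in> t"
  obtain \<alpha> where \<alpha>: "v = Poly_Mapping.single \<alpha> 1"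
    using t(2) v by blast
  have coefficient: "Poly_Mapping.lookup w \<alpha> = (if w = v then 1 else 0)" if "w \<in> t" for w
  proof -
    obtain \<beta> where w: "w = Poly_Mapping.single \<beta> 1"
      using t(2) \<open>w \<in> t\<close> by blast
    show ?thesis
    proof (cases "\<beta> = \<alpha>")
      case False
      then have "w \<noteq> v"
        using w \<alpha> by (simp add: single_one_eq_iff)
      then show ?thesis
        using w False by (simp add: lookup_single_not_eq)
    qed (simp add: w \<alpha>)
  qed
  have "0 = (\<Sum>w\<in>t. u w * Poly_Mapping.lookup w \<alpha>)"
    using arg_cong[OF comb, of "\<lambda>p. Poly_Mapping.lookup p \<alpha>"] by (simp add: lookup_sum)
  also have "\<dots> = (\<Sum>w\<in>t. if w = v then u w else 0)"
    by (rule sum.cong) (simp_all add: coefficient)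
  also have "\<dots> = u v"
    using t(1) v by simp
  finally show "u v = 0"
    by simp
qed

lemma phi_eq_sum:
  assumes "finite A" "Poly_Mapping.keys p \<subseteq> A"
  shows "phi p = (\<Sum>\<alpha>\<in>A. Poly_Mapping.single (xmonom \<alpha>) (Poly_Mapping.lookup p \<alpha>))"
  unfolding phi_def by (rule sum.mono_neutral_left) (use assms in \<open>auto simp: in_keys_iff\<close>)

interpretation phi: Vector_Spaces.linear "pm_scale :: 'k::field \<Rightarrow> _" "pm_scale :: 'k \<Rightarrow> _"
  "phi :: ((nat list \<Rightarrow>\<^sub>0 nat) \<Rightarrow>\<^sub>0 'k) \<Rightarrow> _"
proof unfold_locales
  fix p q :: "(nat list \<Rightarrow>\<^sub>0 nat) \<Rightarrow>\<^sub>0 'k"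
  define A where "A = Poly_Mapping.keys p \<union> Poly_Mapping.keys q"
  have "finite A" "Poly_Mapping.keys (p + q) \<subseteq> A"
    using keys_add[of p q] by (auto simp: A_def)
  then show "phi (p + q) = phi p + phi q"
    using phi_eq_sum[of A p] phi_eq_sum[of A q] phi_eq_sum[of A "p + q"]
    by (simp add: A_def lookup_add single_add sum.distrib)
next
  fix c :: 'k and p :: "(nat list \<Rightarrow>\<^sub>0 nat) \<Rightarrow>\<^sub>0 'k"
  have "Poly_Mapping.keys (pm_scale c p) \<subseteq> Poly_Mapping.keys p"
    by (auto simp: in_keys_iff)
  then show "phi (pm_scale c p) = pm_scale c (phi p)"
    using phi_eq_sum[of "Poly_Mapping.keys p" "pm_scale c p"]
    by (simp add: phi_def pm_scale_single pm_vs.scale_sum_right)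
qed

section \<open>Standard monomials\<close>

definition monomial_of_mset :: "'a multiset \<Rightarrow> ('a \<Rightarrow>\<^sub>0 nat) \<Rightarrow>\<^sub>0 'k::field" where
  "monomial_of_mset M = Poly_Mapping.single (pm_of_mset M) 1"

lemma inj_monomial_of_mset: "inj monomial_of_mset"
  using inj_pm_of_mset by (auto intro!: injI simp: monomial_of_mset_def single_one_eq_iff dest: injD)

lemma phi_monomial_of_mset:
  "phi (monomial_of_mset M :: _ \<Rightarrow>\<^sub>0 'k::field) = Poly_Mapping.single (xmonom (pm_of_mset M)) 1"
  by (simp add: phi_def monomial_of_mset_def)

lemma S_deg_iff: "p \<in> S_deg b d \<longleftrightarrow> Poly_Mapping.keys p \<subseteq> pm_of_mset ` multisets_of_size (box b) d"
  by (auto simp: S_deg_def S_ring_def subset_iff monomial_of_degree_iff)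

lemma monomial_of_mset_in_S_deg:
  "M \<in> multisets_of_size (box b) d \<Longrightarrow> monomial_of_mset M \<in> S_deg b d"
  by (simp add: S_deg_iff monomial_of_mset_def)

lemma S_deg_subset_span_monomials:
  "S_deg b d \<subseteq> pm_vs.span (monomial_of_mset ` multisets_of_size (box b) d)"
proof
  fix p assume "p \<in> S_deg b d"
  then show "p \<in> pm_vs.span (monomial_of_mset ` multisets_of_size (box b) d)"
    by (intro span_monomialsI) (auto simp: S_deg_iff monomial_of_mset_def intro: pm_vs.span_base)
qed

lemma multichains_subset: "multichains b d \<subseteq> multisets_of_size (box b) d"
  by (auto simp: multichains_def multisets_of_size_def init_complex_def)

lemma finite_multichains: "finite (multichains b d)"
  using multichains_subset finite_multisets_of_size[OF finite_box] by (rule finite_subset)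

lemma xmonom_eq_imp_multichain_eq:
  assumes "M \<in> multichains b d" "M' \<in> multichains b d"
    and "xmonom (pm_of_mset M) = xmonom (pm_of_mset M')"
  shows "M = M'"
proof (rule multichain_eqI)
  show "set_mset M \<in> init_complex b" "set_mset M' \<in> init_complex b" "size M = size M'"
    using assms(1,2) by (auto simp: multichains_def)
  show "\<forall>i<length b. image_mset (\<lambda>v. v ! i) M = image_mset (\<lambda>v. v ! i) M'"
    using assms multichains_subset xmonom_pm_of_mset_eq_iff[of M b M']
    by (auto simp: multisets_of_size_def)
qed

lemma monomial_congruent_standard:
  assumes M: "M \<in> multisets_of_size (box b) d"
  obtains M' where "M' \<in> multichains b d"
    and "monomial_of_mset M - (monomial_of_mset M' :: _ \<Rightarrow>\<^sub>0 'k::field) \<in> S_deg b d \<inter> {p. phi p = 0}"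
proof -
  have box: "set_mset M \<subseteq> box b"
    using M by (simp add: multisets_of_size_def)
  then obtain M' where M': "set_mset M' \<in> init_complex b" "size M' = size M"
    "\<forall>i<length b. image_mset (\<lambda>v. v ! i) M' = image_mset (\<lambda>v. v ! i) M"
    using multichain_exists by blast
  have "M' \<in> multichains b d"
    using M' M by (simp add: multichains_def multisets_of_size_def)
  moreover have "monomial_of_mset M - (monomial_of_mset M' :: _ \<Rightarrow>\<^sub>0 'k) \<in> S_deg b d"
  proof -
    have "M' \<in> multisets_of_size (box b) d"
      using \<open>M' \<in> multichains b d\<close> multichains_subset by blast
    then have "Poly_Mapping.keys (monomial_of_mset M - (monomial_of_mset M' :: _ \<Rightarrow>\<^sub>0 'k))
        \<subseteq> pm_of_mset ` multisets_of_size (box b) d"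
      using keys_diff[of "monomial_of_mset M" "monomial_of_mset M' :: _ \<Rightarrow>\<^sub>0 'k"] M
      by (auto simp: monomial_of_mset_def)
    then show ?thesis
      by (simp add: S_deg_iff)
  qed
  moreover have "xmonom (pm_of_mset M) = xmonom (pm_of_mset M')"
    using xmonom_pm_of_mset_eq_iff[OF box, of M'] M' by (auto simp: init_complex_def)
  then have "phi (monomial_of_mset M - (monomial_of_mset M' :: _ \<Rightarrow>\<^sub>0 'k)) = 0"
    by (simp add: phi.diff phi_monomial_of_mset)
  ultimately show ?thesis
    using that by blast
qed

lemma S_deg_subset_span_kernel_standard:
  "(S_deg b d :: (_ \<Rightarrow>\<^sub>0 'k::field) set) \<subseteq>
    pm_vs.span (S_deg b d \<inter> {p. phi p = 0} \<union> monomial_of_mset ` multichains b d)"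
proof
  fix p :: "_ \<Rightarrow>\<^sub>0 'k"
  assume p: "p \<in> S_deg b d"
  let ?X = "S_deg b d \<inter> {p. phi p = 0} \<union> monomial_of_mset ` multichains b d :: (_ \<Rightarrow>\<^sub>0 'k) set"
  have "monomial_of_mset M \<in> pm_vs.span ?X" if M: "M \<in> multisets_of_size (box b) d" for M
  proof -
    obtain M' where M': "M' \<in> multichains b d"
      "monomial_of_mset M - (monomial_of_mset M' :: _ \<Rightarrow>\<^sub>0 'k) \<in> S_deg b d \<inter> {p. phi p = 0}"
      using monomial_congruent_standard[OF M] .
    then have "(monomial_of_mset M - monomial_of_mset M') + monomial_of_mset M' \<in> pm_vs.span ?X"
      by (intro pm_vs.span_add pm_vs.span_base) auto
    then show ?thesis
      by simp
  qed
  then show "p \<in> pm_vs.span ?X"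
    using p by (intro span_monomialsI) (auto simp: S_deg_iff monomial_of_mset_def)
qed

lemma hilbert_fun_eq_card_multichains: "hilbert_fun TYPE('k::field) b d = card (multichains b d)"
proof -
  let ?T = "monomial_of_mset ` multichains b d :: (_ \<Rightarrow>\<^sub>0 'k) set"
  have "?T \<subseteq> S_deg b d"
    using multichains_subset monomial_of_mset_in_S_deg by blast
  moreover have "inj_on phi ?T"
  proof (rule inj_onI)
    fix p q assume "p \<in> ?T" "q \<in> ?T" "phi p = phi q"
    then obtain M M' where M: "M \<in> multichains b d" "M' \<in> multichains b d"
      and pq: "p = monomial_of_mset M" "q = monomial_of_mset M'"
      and "phi p = phi q"
      by blast
    then have "xmonom (pm_of_mset M) = xmonom (pm_of_mset M')"
      by (simp add: phi_monomial_of_mset single_one_eq_iff)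
    then show "p = q"
      using xmonom_eq_imp_multichain_eq[OF M] pq by simp
  qed
  moreover have "phi ` ?T = (\<lambda>\<alpha>. Poly_Mapping.single \<alpha> 1) ` (\<lambda>M. xmonom (pm_of_mset M)) ` multichains b d"
    by (simp add: image_image phi_monomial_of_mset)
  then have "pm_vs.independent (phi ` ?T)"
    using independent_monomials by simp
  ultimately have "pm_vs.dim (S_deg b d :: (_ \<Rightarrow>\<^sub>0 'k) set) =
      pm_vs.dim (S_deg b d \<inter> {p. phi p = 0} :: (_ \<Rightarrow>\<^sub>0 'k) set) + card ?T"
    using finite_multisets_of_size[OF finite_box] finite_multichains
    by (intro phi.dim_eq_dim_kernel_add_card[OF _ S_deg_subset_span_monomials]
        S_deg_subset_span_kernel_standard finite_imageI)
  moreover have "(S_deg b d \<inter> J_ideal b :: (_ \<Rightarrow>\<^sub>0 'k) set) = S_deg b d \<inter> {p. phi p = 0}"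
    by (auto simp: S_deg_def J_ideal_def)
  moreover have "card ?T = card (multichains b d)"
    by (rule card_image, rule inj_on_subset[OF inj_monomial_of_mset]) simp
  ultimately show ?thesis
    by (simp add: hilbert_fun_def)
qed

theorem mainTheorem10:
  fixes b :: "nat list"
  assumes pos: "\<forall>i<length b. 0 < b ! i"
  shows "init_complex b = (\<Union>u\<in>words b. face_interval b (Gu b u) (Fu b u))
    \<and> (\<forall>u\<in>words b. \<forall>u'\<in>words b. u \<noteq> u' \<longrightarrow>
          face_interval b (Gu b u) (Fu b u) \<inter> face_interval b (Gu b u') (Fu b u') = {})
    \<and> hilbert_series TYPE('k::field) b
        = fps_of_poly (A_poly b) / (1 - fps_X) ^ (sum_list b + 1)
    \<and> (\<forall>k. coeff (A_poly b) k = of_nat (newcomb b k))"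
proof -
  have "hilbert_series TYPE('k) b = Abs_fps (\<lambda>d. of_nat (card (multichains b d)))"
    by (simp add: hilbert_series_def hilbert_fun_eq_card_multichains)
  then show ?thesis
    using init_complex_eq_Union_face_intervals face_intervals_disjoint fps_card_multichains
      coeff_A_poly
    by auto
qed

end
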